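(* Let $X$ be a compact metric space, $f:X\to X$ continuous, $n\ge1$ an integer and $x\in X$. If $\omega_f(x)\subset \mathrm{Fix}(f^n)$, then the number of connected components of $\omega_f(x)$ divides $n$.
   Context: $\mathrm{Fix}(g)$ denotes the set of fixed points of $g$, and $f^n$ is the $n$-th iterate of $f$. The $\omega$-limit set is $\omega_f(x)=\{y\in X:\ \exists\, n_i\to+\infty,\ f^{n_i}(x)\to y\}$. *)

theory Defs
  imports "HOL-Analysis.Analysis"
begin

definition Fix :: "'a set \<Rightarrow> ('a \<Rightarrow> 'a) \<Rightarrow> 'a set" where
  "Fix X g = {y \<in> X. g y = y}"

definition omega_limit :: "'a::metric_space set \<Rightarrow> ('a \<Rightarrow> 'a) \<Rightarrow> 'a \<Rightarrow> 'a set" where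
  "omega_limit X f x = {y \<in> X. \<exists>r::nat \<Rightarrow> nat. strict_mono r \<and> ((\<lambda>i. (f ^^ r i) x) \<longlonglongrightarrow> y)}"

end

theory Submission
  imports Defs "HOL-Combinatorics.Orbits"
begin

text \<open>
  Write \<open>W\<close> for the omega-limit set. It is compact, nonempty and invariant, and since \<open>f^n\<close> is the
  identity on \<open>W\<close>, \<open>f\<close> is a homeomorphism of \<open>W\<close>, and \<open>\<sigma> C = f ` C\<close> permutes the components
  of \<open>W\<close> with \<open>\<sigma>^n = id\<close>.
  The dynamical input is that \<open>W\<close> admits no proper nonempty relatively clopen subset \<open>G\<close> with
  \<open>f G \<subseteq> G\<close>: otherwise the orbit of \<open>x\<close> would jump from a neighbourhood of \<open>G\<close> to one of
  \<open>W - G\<close> infinitely often, and a limit of the jump points would lie in \<open>G\<close> while its image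
  does not. Applied to the union of the preimages of a clopen set under \<open>f^0, \<dots>, f^(n-1)\<close>, this
  shows that every orbit in \<open>W\<close> meets every nonempty clopen subset, hence (components being
  quasi-components in a compact space) every component. So the components form a single
  \<open>\<sigma>\<close>-orbit, whose length divides \<open>n\<close>.
\<close>

section \<open>Iterates of a map\<close>

lemma funpow_in_invariant_set: "f ` S \<subseteq> S \<Longrightarrow> x \<in> S \<Longrightarrow> (f ^^ m) x \<in> S"
  by (induction m) auto

lemma funpow_image:
  fixes f :: "'a \<Rightarrow> 'a"
  shows "((`) f ^^ m) A = (f ^^ m) ` A"
  by (induction m) (simp_all add: image_image o_def)

lemma image_cong_id: "(\<And>y. y \<in> A \<Longrightarrow> g y = y) \<Longrightarrow> g ` A = A"
  using image_cong[of A A g id] by simp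

lemma card_range_funpow_dvd:
  assumes "(\<sigma> ^^ n) a = a" and "0 < n"
  shows "card (range (\<lambda>m. (\<sigma> ^^ m) a)) dvd n"
proof -
  have a_in_orbit: "a \<in> orbit \<sigma> a"
    unfolding orbit_altdef using assms by force
  define p where "p = funpow_dist1 \<sigma> a a"
  have "range (\<lambda>m. (\<sigma> ^^ m) a) = orbit \<sigma> a"
    using orbit_altdef_self_in[OF a_in_orbit] by blast
  also have "\<dots> = (\<lambda>m. (\<sigma> ^^ m) a) ` {0..<p}"
    unfolding p_def by (rule orbit_conv_funpow_dist1[OF a_in_orbit])
  finally have card_p: "card (range (\<lambda>m. (\<sigma> ^^ m) a)) = p"
    using card_image[OF inj_on_funpow_dist1[OF a_in_orbit]] by (simp add: p_def)
  have "(\<sigma> ^^ p) a = a"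
    unfolding p_def by (rule funpow_dist1_prop[OF a_in_orbit])
  then have "(\<sigma> ^^ (n mod p)) a = a"
    using assms(1) by (metis funpow_mod_eq)
  then have "n mod p = 0"
    using funpow_dist1_least[of "n mod p" \<sigma> a a] by (fastforce simp: p_def)
  then show ?thesis
    using card_p by auto
qed

lemma periodic_hitting_set_invariant:
  assumes "f ` W \<subseteq> W" "0 < n" and periodic: "\<And>w. w \<in> W \<Longrightarrow> (f ^^ n) w = w"
  shows "f ` {z \<in> W. \<exists>i<n. (f ^^ i) z \<in> V} \<subseteq> {z \<in> W. \<exists>i<n. (f ^^ i) z \<in> V}"
proof
  fix z assume "z \<in> f ` {z \<in> W. \<exists>i<n. (f ^^ i) z \<in> V}"
  then obtain y i where z: "z = f y" and "y \<in> W" "i < n" "(f ^^ i) y \<in> V"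
    by blast
  then have "z \<in> W"
    using assms(1) by blast
  \<comment> \<open>the step back from \<open>i\<close> to \<open>i - 1\<close> is taken modulo the period \<open>n\<close>\<close>
  have "(f ^^ ((i + n - 1) mod n)) z = (f ^^ (i + n - 1)) (f y)"
    using periodic \<open>z \<in> W\<close> unfolding z by (simp add: funpow_mod_eq)
  also have "\<dots> = (f ^^ i) ((f ^^ n) y)"
    using \<open>0 < n\<close> by (metis Suc_diff_1 add_gr_0 comp_apply funpow_Suc_right funpow_add)
  also have "\<dots> = (f ^^ i) y"
    using periodic[OF \<open>y \<in> W\<close>] by simp
  finally have "(f ^^ ((i + n - 1) mod n)) z \<in> V"
    using \<open>(f ^^ i) y \<in> V\<close> by simp
  moreover have "(i + n - 1) mod n < n"
    using \<open>0 < n\<close> by simp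
  ultimately show "z \<in> {z \<in> W. \<exists>i<n. (f ^^ i) z \<in> V}"
    using \<open>z \<in> W\<close> by blast
qed

lemma continuous_on_funpow:
  assumes "continuous_on S f" and "f ` S \<subseteq> S"
  shows "continuous_on S (f ^^ m)"
proof (induction m)
  case (Suc m)
  have "continuous_on ((f ^^ m) ` S) f"
    using continuous_on_subset[OF assms(1)] funpow_in_invariant_set[OF assms(2)] by blast
  then show ?case
    using continuous_on_compose[OF Suc.IH] by simp
qed simp

lemma periodic_imp_homeomorphism:
  assumes "continuous_on W f" "f ` W \<subseteq> W" "0 < n" and periodic: "\<And>w. w \<in> W \<Longrightarrow> (f ^^ n) w = w"
  shows "homeomorphism W W f (f ^^ (n - 1))"
proof (rule homeomorphismI)
  show "continuous_on W (f ^^ (n - 1))"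
    using assms(1,2) by (rule continuous_on_funpow)
  show "(f ^^ (n - 1)) ` W \<subseteq> W"
    using funpow_in_invariant_set[OF assms(2)] by blast
  have "Suc (n - 1) = n"
    using \<open>0 < n\<close> by simp
  then have "(f ^^ (n - 1)) (f w) = (f ^^ n) w" "f ((f ^^ (n - 1)) w) = (f ^^ n) w" for w
    by (metis funpow_swap1 funpow.simps(2) comp_apply)+
  then show "(f ^^ (n - 1)) (f w) = w" "f ((f ^^ (n - 1)) w) = w" if "w \<in> W" for w
    using periodic[OF that] by simp_all
qed (use assms in simp_all)

section \<open>Subsequences and components\<close>

lemma frequently_in_nhds_imp_convergent_subsequence:
  fixes s :: "nat \<Rightarrow> 'a::first_countable_topology"
  assumes "\<And>U. open U \<Longrightarrow> y \<in> U \<Longrightarrow> frequently (\<lambda>m. s m \<in> U) sequentially"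
  shows "\<exists>r. strict_mono r \<and> (s \<circ> r) \<longlonglongrightarrow> y"
proof -
  obtain A where A: "\<And>i. open (A i)" "\<And>i. y \<in> A i"
    "\<And>S. open S \<Longrightarrow> y \<in> S \<Longrightarrow> eventually (\<lambda>i. A i \<subseteq> S) sequentially"
    using countable_basis_at_decseq[of y] by blast
  have "\<forall>i j. \<exists>k. j < k \<and> s k \<in> A i"
    using assms[OF A(1,2)] unfolding frequently_sequentially by (meson Suc_le_eq)
  then obtain g where g: "\<And>i j. j < g i j \<and> s (g i j) \<in> A i"
    by metis
  define r where "r = rec_nat (g 0 0) (\<lambda>i. g (Suc i))"
  have r_Suc: "r (Suc i) = g (Suc i) (r i)" for i
    by (simp add: r_def)
  have "strict_mono r"
    unfolding strict_mono_Suc_iff using g r_Suc by simp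
  moreover have r_in: "s (r i) \<in> A i" for i
    using g by (cases i) (simp_all add: r_def)
  have "(s \<circ> r) \<longlonglongrightarrow> y"
  proof (rule topological_tendstoI)
    fix S assume "open S" "y \<in> S"
    then have "eventually (\<lambda>i. A i \<subseteq> S) sequentially"
      by (rule A(3))
    then show "eventually (\<lambda>i. (s \<circ> r) i \<in> S) sequentially"
      by eventually_elim (use r_in in auto)
  qed
  ultimately show ?thesis
    by blast
qed

lemma frequently_transition:
  assumes "eventually (\<lambda>m. P m \<or> Q m) sequentially"
    and "frequently P sequentially" and "frequently Q sequentially"
  shows "frequently (\<lambda>m. P m \<and> Q (Suc m)) sequentially"
  unfolding frequently_sequentially
proof (rule allI, rule ccontr)
  fix N assume no_transition: "\<not> (\<exists>m\<ge>N. P m \<and> Q (Suc m))"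
  obtain M where M: "\<And>m. m \<ge> M \<Longrightarrow> P m \<or> Q m"
    using assms(1) unfolding eventually_sequentially by blast
  obtain a where a: "a \<ge> max M N" "P a"
    using assms(2) unfolding frequently_sequentially by blast
  have P_from_a: "P (a + k)" for k
  proof (induction k)
    case (Suc k)
    then show ?case
      using no_transition M[of "Suc (a + k)"] a(1) by auto
  qed (use a in simp)
  obtain b where "b \<ge> Suc a" "Q b"
    using assms(3) unfolding frequently_sequentially by blast
  then have "Q (Suc (a + (b - Suc a)))"
    by simp
  moreover have "P (a + (b - Suc a))"
    by (rule P_from_a)
  moreover have "a + (b - Suc a) \<ge> N"
    using a(1) by simp
  ultimately show False
    using no_transition by blast
qed

lemma compact_component_clopen_separation:
  fixes W :: "'a::metric_space set"
  assumes "compact W" "c \<in> W" "y \<in> W - connected_component_set W c"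
  obtains T where "closedin (top_of_set W) T" "openin (top_of_set W) T" "c \<in> T" "y \<notin> T"
proof -
  have "quasi_component_of (top_of_set W) c = connected_component_of (top_of_set W) c"
    using assms(1) by (intro quasi_eq_connected_component_of)
      (simp add: compact_space_subtopology Hausdorff_space_subtopology)
  moreover have "\<not> connected_component_of (top_of_set W) c y"
  proof
    assume "connected_component_of (top_of_set W) c y"
    then obtain T where "connectedin (top_of_set W) T" "c \<in> T" "y \<in> T"
      unfolding connected_component_of_def by blast
    then have "connected_component W c y"
      unfolding connected_component_def connectedin_subtopology by auto
    then show False
      using assms(3) by simp
  qed
  ultimately have "\<not> quasi_component_of (top_of_set W) c y"
    by simp
  then show ?thesis
    using assms(2,3) that unfolding quasi_component_of by auto
qed

lemma compact_finite_meets_clopen_imp_meets_components: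
  fixes W :: "'a::metric_space set"
  assumes "compact W" "finite F"
    and meets_clopen: "\<And>V. closedin (top_of_set W) V \<Longrightarrow> openin (top_of_set W) V \<Longrightarrow> V \<noteq> {}
        \<Longrightarrow> F \<inter> V \<noteq> {}"
    and "C \<in> components W"
  shows "F \<inter> C \<noteq> {}"
proof
  assume disjoint: "F \<inter> C = {}"
  obtain c where "c \<in> W" and C: "C = connected_component_set W c"
    using \<open>C \<in> components W\<close> components_iff by blast
  have "\<exists>T. closedin (top_of_set W) T \<and> openin (top_of_set W) T \<and> c \<in> T \<and> y \<notin> T"
    if "y \<in> F \<inter> W" for y
    using compact_component_clopen_separation[OF assms(1) \<open>c \<in> W\<close>, of y] that disjoint C by blast
  then obtain T where T: "\<And>y. y \<in> F \<inter> W \<Longrightarrow>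
      closedin (top_of_set W) (T y) \<and> openin (top_of_set W) (T y) \<and> c \<in> T y \<and> y \<notin> T y"
    by metis
  define V where "V = \<Inter> (insert W (T ` (F \<inter> W)))"
  have "closedin (top_of_set W) V"
    unfolding V_def using T by (intro closedin_Inter) auto
  moreover have "openin (top_of_set W) V"
    unfolding V_def using T \<open>finite F\<close> by (intro openin_Inter) auto
  moreover have "c \<in> V"
    unfolding V_def using T \<open>c \<in> W\<close> by blast
  ultimately obtain y where "y \<in> F" "y \<in> V"
    using meets_clopen by blast
  then show False
    unfolding V_def using T by blast
qed

lemma homeomorphism_image_components:
  assumes "homeomorphism S T f g" "C \<in> components S"
  shows "f ` C \<in> components T"
  using assms connected_component_set_homeomorphism homeomorphism_image1
  by (metis components_iff imageI)

section \<open>Omega-limit sets\<close>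

lemma omega_limit_subset: "omega_limit X f x \<subseteq> X"
  unfolding omega_limit_def by blast

lemma omega_limit_iff_frequently:
  "y \<in> omega_limit X f x \<longleftrightarrow>
     y \<in> X \<and> (\<forall>U. open U \<longrightarrow> y \<in> U \<longrightarrow> frequently (\<lambda>m. (f ^^ m) x \<in> U) sequentially)"
proof
  assume "y \<in> omega_limit X f x"
  then obtain r where "y \<in> X" "strict_mono r" and lim: "(\<lambda>i. (f ^^ r i) x) \<longlonglongrightarrow> y"
    unfolding omega_limit_def by blast
  have "frequently (\<lambda>m. (f ^^ m) x \<in> U) sequentially" if "open U" "y \<in> U" for U
    unfolding frequently_sequentially
  proof
    fix N
    obtain M where M: "\<And>i. i \<ge> M \<Longrightarrow> (f ^^ r i) x \<in> U"
      using topological_tendstoD[OF lim \<open>open U\<close> \<open>y \<in> U\<close>] unfolding eventually_sequentially by blast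
    have "r (max M N) \<ge> N"
      using seq_suble[OF \<open>strict_mono r\<close>, of "max M N"] by linarith
    then show "\<exists>m\<ge>N. (f ^^ m) x \<in> U"
      using M[of "max M N"] by auto
  qed
  with \<open>y \<in> X\<close> show "y \<in> X \<and> (\<forall>U. open U \<longrightarrow> y \<in> U \<longrightarrow> frequently (\<lambda>m. (f ^^ m) x \<in> U) sequentially)"
    by blast
next
  assume "y \<in> X \<and> (\<forall>U. open U \<longrightarrow> y \<in> U \<longrightarrow> frequently (\<lambda>m. (f ^^ m) x \<in> U) sequentially)"
  then show "y \<in> omega_limit X f x"
    using frequently_in_nhds_imp_convergent_subsequence[of y "\<lambda>m. (f ^^ m) x"]
    unfolding omega_limit_def o_def by blast
qed

lemma closed_omega_limit:
  assumes "closed X"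
  shows "closed (omega_limit X f x)"
  unfolding closed_limpt
proof (intro allI impI)
  fix y assume y: "y islimpt omega_limit X f x"
  then have "y \<in> X"
    using assms omega_limit_subset islimpt_subset closed_limpt by blast
  moreover have "frequently (\<lambda>m. (f ^^ m) x \<in> U) sequentially" if U: "open U" "y \<in> U" for U
  proof -
    obtain w where "w \<in> omega_limit X f x" "w \<in> U"
      using islimptE[OF y U(2,1)] by blast
    then show ?thesis
      using \<open>open U\<close> omega_limit_iff_frequently by blast
  qed
  ultimately show "y \<in> omega_limit X f x"
    using omega_limit_iff_frequently by blast
qed

lemma compact_omega_limit:
  assumes "compact X"
  shows "compact (omega_limit X f x)"
proof -
  have "compact (X \<inter> omega_limit X f x)"
    using assms by (intro compact_Int_closed closed_omega_limit compact_imp_closed)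
  then show ?thesis
    using omega_limit_subset by (metis Int_absorb1)
qed

lemma omega_limit_cluster_point:
  assumes "compact X" "f ` X \<subseteq> X" "x \<in> X" and "frequently P sequentially"
  obtains r :: "nat \<Rightarrow> nat" and l where "strict_mono r" "\<And>i. P (r i)" "l \<in> omega_limit X f x"
    "(\<lambda>i. (f ^^ r i) x) \<longlonglongrightarrow> l"
proof -
  have "\<exists>r :: nat \<Rightarrow> nat. strict_mono r \<and> (\<forall>i. P (r i))"
    using not_eventually_sequentiallyD[of "\<lambda>m. \<not> P m"] assms(4)
    unfolding frequently_def by auto
  then obtain r :: "nat \<Rightarrow> nat" where r: "strict_mono r" "\<And>i. P (r i)"
    by blast
  obtain l r' where "l \<in> X" "strict_mono r'" "((\<lambda>i. (f ^^ r i) x) \<circ> r') \<longlonglongrightarrow> l"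
    using seq_compactE[OF compact_imp_seq_compact[OF assms(1)], of "\<lambda>i. (f ^^ r i) x"]
      funpow_in_invariant_set[OF assms(2,3)] by blast
  moreover have "strict_mono (r \<circ> r')"
    using r(1) \<open>strict_mono r'\<close> by (rule strict_mono_o)
  ultimately show ?thesis
    using that[of "r \<circ> r'" l] r(2) unfolding omega_limit_def by (auto simp: o_def)
qed

lemma omega_limit_nonempty:
  "compact X \<Longrightarrow> f ` X \<subseteq> X \<Longrightarrow> x \<in> X \<Longrightarrow> omega_limit X f x \<noteq> {}"
  using omega_limit_cluster_point[of X f x "\<lambda>_. True"] by auto

lemma omega_limit_invariant:
  assumes "continuous_on X f" "f ` X \<subseteq> X" "x \<in> X"
  shows "f ` omega_limit X f x \<subseteq> omega_limit X f x"
proof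
  fix z assume "z \<in> f ` omega_limit X f x"
  then obtain y r where z: "z = f y" and "y \<in> X" "strict_mono r"
    and lim: "(\<lambda>i. (f ^^ r i) x) \<longlonglongrightarrow> y"
    unfolding omega_limit_def by blast
  have "(\<lambda>i. f ((f ^^ r i) x)) \<longlonglongrightarrow> f y"
    by (rule continuous_on_tendsto_compose[OF assms(1) lim \<open>y \<in> X\<close>])
      (simp add: funpow_in_invariant_set[OF assms(2,3)])
  then have "(\<lambda>i. (f ^^ Suc (r i)) x) \<longlonglongrightarrow> z"
    using z by simp
  moreover have "strict_mono (\<lambda>i. Suc (r i))"
    using \<open>strict_mono r\<close> by (simp add: strict_mono_def)
  ultimately show "z \<in> omega_limit X f x"
    using \<open>y \<in> X\<close> assms(2) z unfolding omega_limit_def by blast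
qed

lemma omega_limit_subset_open_imp_eventually:
  assumes "compact X" "f ` X \<subseteq> X" "x \<in> X" and "open U" "omega_limit X f x \<subseteq> U"
  shows "eventually (\<lambda>m. (f ^^ m) x \<in> U) sequentially"
proof (rule ccontr)
  assume "\<not> ?thesis"
  then have "frequently (\<lambda>m. (f ^^ m) x \<notin> U) sequentially"
    by (simp add: not_eventually)
  then obtain r :: "nat \<Rightarrow> nat" and l where "strict_mono r" and outside: "\<And>i. (f ^^ r i) x \<notin> U"
    and "l \<in> omega_limit X f x" and lim: "(\<lambda>i. (f ^^ r i) x) \<longlonglongrightarrow> l"
    using omega_limit_cluster_point[OF assms(1-3)] by blast
  have "l \<in> - U"
    by (rule Lim_in_closed_set[OF _ _ _ lim]) (use \<open>open U\<close> outside in auto)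
  then show False
    using \<open>l \<in> omega_limit X f x\<close> assms(5) by blast
qed

lemma omega_limit_exit_point:
  assumes X: "compact X" "continuous_on X f" "f ` X \<subseteq> X" "x \<in> X"
    and UV: "open U" "open V" "U \<inter> V = {}" "omega_limit X f x \<subseteq> U \<union> V"
    and meets: "U \<inter> omega_limit X f x \<noteq> {}" "V \<inter> omega_limit X f x \<noteq> {}"
  obtains l where "l \<in> omega_limit X f x" "l \<in> U" "f l \<notin> U"
proof -
  define s where "s m = (f ^^ m) x" for m
  have "eventually (\<lambda>m. s m \<in> U \<union> V) sequentially"
    unfolding s_def using omega_limit_subset_open_imp_eventually[OF X(1,3,4)] UV(1,2,4) by blast
  then have "eventually (\<lambda>m. s m \<in> U \<or> s m \<in> V) sequentially"
    by simp
  moreover have "frequently (\<lambda>m. s m \<in> U) sequentially" "frequently (\<lambda>m. s m \<in> V) sequentially"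
    using meets UV(1,2) omega_limit_iff_frequently unfolding s_def by blast+
  ultimately have "frequently (\<lambda>m. s m \<in> U \<and> s (Suc m) \<in> V) sequentially"
    by (rule frequently_transition)
  then obtain r :: "nat \<Rightarrow> nat" and l where r: "\<And>i. s (r i) \<in> U \<and> s (Suc (r i)) \<in> V"
    and "l \<in> omega_limit X f x" and lim: "(\<lambda>i. s (r i)) \<longlonglongrightarrow> l"
    using omega_limit_cluster_point[OF X(1,3,4)] unfolding s_def by blast
  have "l \<in> - V"
    using UV r by (intro Lim_in_closed_set[OF _ _ _ lim] always_eventually) auto
  then have "l \<in> U"
    using \<open>l \<in> omega_limit X f x\<close> UV(4) by blast
  have "l \<in> X"
    using \<open>l \<in> omega_limit X f x\<close> omega_limit_subset by blast
  have "(\<lambda>i. f (s (r i))) \<longlonglongrightarrow> f l"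
    by (rule continuous_on_tendsto_compose[OF X(2) lim \<open>l \<in> X\<close>])
      (simp add: s_def funpow_in_invariant_set[OF X(3,4)])
  then have "f l \<in> - U"
    using UV r by (intro Lim_in_closed_set always_eventually) (auto simp: s_def)
  then show ?thesis
    using that \<open>l \<in> omega_limit X f x\<close> \<open>l \<in> U\<close> by blast
qed

lemma omega_limit_invariant_clopen_eq:
  assumes X: "compact X" "continuous_on X f" "f ` X \<subseteq> X" "x \<in> X"
    and G: "closedin (top_of_set (omega_limit X f x)) G" "openin (top_of_set (omega_limit X f x)) G"
      "G \<noteq> {}" "f ` G \<subseteq> G"
  shows "G = omega_limit X f x"
proof (rule ccontr)
  define W where "W = omega_limit X f x"
  define H where "H = W - G"
  assume "G \<noteq> omega_limit X f x"
  moreover have "G \<subseteq> W"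
    using G(1) closedin_imp_subset unfolding W_def by blast
  ultimately have "H \<noteq> {}"
    unfolding H_def W_def by blast
  have "compact W"
    unfolding W_def using X(1) by (rule compact_omega_limit)
  moreover have "closedin (top_of_set W) H"
    unfolding H_def W_def using G(2) by (simp add: closedin_diff)
  ultimately have "compact G" "compact H"
    using G(1) closedin_compact unfolding W_def by blast+
  then obtain U V where UV: "open U" "open V" "G \<subseteq> U" "H \<subseteq> V" "U \<inter> V = {}"
    using Hausdorff_space_compact_separation[of euclidean G H] by (auto simp: H_def disjnt_def)
  moreover have "W \<subseteq> U \<union> V" "U \<inter> W \<noteq> {}" "V \<inter> W \<noteq> {}"
    using UV \<open>G \<subseteq> W\<close> \<open>G \<noteq> {}\<close> \<open>H \<noteq> {}\<close> unfolding H_def by blast+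
  ultimately obtain l where "l \<in> W" "l \<in> U" "f l \<notin> U"
    using omega_limit_exit_point[OF X, of U V] unfolding W_def by blast
  then have "l \<in> G"
    using UV(4,5) unfolding H_def by blast
  then show False
    using \<open>f l \<notin> U\<close> G(4) UV(3) by blast
qed

lemma omega_limit_periodic_orbit_meets_clopen:
  assumes X: "compact X" "continuous_on X f" "f ` X \<subseteq> X" "x \<in> X"
    and "0 < n" and periodic: "\<And>w. w \<in> omega_limit X f x \<Longrightarrow> (f ^^ n) w = w"
    and V: "closedin (top_of_set (omega_limit X f x)) V" "openin (top_of_set (omega_limit X f x)) V"
      "V \<noteq> {}"
    and "w \<in> omega_limit X f x"
  shows "\<exists>i<n. (f ^^ i) w \<in> V"
proof -
  define W where "W = omega_limit X f x"
  define G where "G = (\<Union>i<n. W \<inter> (f ^^ i) -` V)"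
  have "f ` W \<subseteq> W"
    unfolding W_def by (rule omega_limit_invariant[OF X(2-4)])
  have cont: "continuous_on W (f ^^ i)" for i
    using continuous_on_funpow[OF continuous_on_subset[OF X(2)] \<open>f ` W \<subseteq> W\<close>] omega_limit_subset
    unfolding W_def by blast
  have maps: "(f ^^ i) \<in> W \<rightarrow> W" for i
    using funpow_in_invariant_set[OF \<open>f ` W \<subseteq> W\<close>] by blast
  have "closedin (top_of_set W) G"
    unfolding G_def using continuous_closedin_preimage_gen[OF cont maps] V(1)
    by (intro closedin_Union) (auto simp: W_def)
  moreover have "openin (top_of_set W) G"
    unfolding G_def using continuous_openin_preimage[OF cont maps] V(2)
    by (intro openin_Union) (auto simp: W_def)
  moreover have "G \<noteq> {}"
    using \<open>0 < n\<close> V(3) closedin_imp_subset[OF V(1)] unfolding G_def W_def by force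
  moreover have "f ` G \<subseteq> G"
    using periodic_hitting_set_invariant[OF \<open>f ` W \<subseteq> W\<close> \<open>0 < n\<close>, of V] periodic
    unfolding G_def W_def by blast
  ultimately have "G = W"
    using omega_limit_invariant_clopen_eq[OF X] unfolding W_def by blast
  then show ?thesis
    using \<open>w \<in> omega_limit X f x\<close> unfolding G_def W_def by blast
qed

lemma omega_limit_periodic_orbit_meets_components:
  assumes X: "compact X" "continuous_on X f" "f ` X \<subseteq> X" "x \<in> X"
    and "0 < n" and periodic: "\<And>w. w \<in> omega_limit X f x \<Longrightarrow> (f ^^ n) w = w"
    and "C \<in> components (omega_limit X f x)" and "w \<in> omega_limit X f x"
  shows "\<exists>i<n. (f ^^ i) w \<in> C"
proof -
  have "(\<lambda>i. (f ^^ i) w) ` {..<n} \<inter> V \<noteq> {}"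
    if "closedin (top_of_set (omega_limit X f x)) V" "openin (top_of_set (omega_limit X f x)) V"
      "V \<noteq> {}" for V
    using omega_limit_periodic_orbit_meets_clopen[OF X \<open>0 < n\<close> periodic, of V w] that
      \<open>w \<in> omega_limit X f x\<close> by blast
  moreover have "finite ((\<lambda>i. (f ^^ i) w) ` {..<n})"
    by simp
  ultimately have "(\<lambda>i. (f ^^ i) w) ` {..<n} \<inter> C \<noteq> {}"
    using compact_finite_meets_clopen_imp_meets_components[OF compact_omega_limit[OF X(1)]]
      \<open>C \<in> components (omega_limit X f x)\<close> by blast
  then show ?thesis
    by blast
qed

lemma omega_limit_components_eq_orbit:
  assumes X: "compact X" "continuous_on X f" "f ` X \<subseteq> X" "x \<in> X"
    and "0 < n" and periodic: "\<And>w. w \<in> omega_limit X f x \<Longrightarrow> (f ^^ n) w = w"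
    and C: "C \<in> components (omega_limit X f x)"
  shows "components (omega_limit X f x) = range (\<lambda>m. (f ^^ m) ` C)"
proof -
  define W where "W = omega_limit X f x"
  have "f ` W \<subseteq> W"
    unfolding W_def by (rule omega_limit_invariant[OF X(2-4)])
  moreover have "continuous_on W f"
    using continuous_on_subset[OF X(2)] omega_limit_subset unfolding W_def by blast
  ultimately have homeo: "homeomorphism W W f (f ^^ (n - 1))"
    using periodic_imp_homeomorphism \<open>0 < n\<close> periodic unfolding W_def by blast
  have iterate_component: "(f ^^ m) ` D \<in> components W" if "D \<in> components W" for D m
  proof (induction m)
    case (Suc m)
    then have "f ` (f ^^ m) ` D \<in> components W"
      by (rule homeomorphism_image_components[OF homeo])
    then show ?case
      by (simp add: image_comp)
  qed (use that in simp)
  have "D \<in> range (\<lambda>m. (f ^^ m) ` C)" if D: "D \<in> components W" for D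
  proof -
    obtain d where "d \<in> D"
      using D in_components_nonempty by blast
    moreover have "\<exists>i<n. (f ^^ i) d \<in> C"
      using omega_limit_periodic_orbit_meets_components[OF X \<open>0 < n\<close> periodic C] \<open>d \<in> D\<close>
        in_components_subset[OF D] unfolding W_def by blast
    ultimately obtain i where "i < n" "(f ^^ i) d \<in> C" "(f ^^ i) d \<in> (f ^^ i) ` D"
      by blast
    then have "(f ^^ i) ` D = C"
      using iterate_component[OF D] C components_nonoverlap unfolding W_def by blast
    have "D = (f ^^ n) ` D"
      using periodic in_components_subset[OF D] unfolding W_def by (metis image_cong_id subsetD)
    also have "\<dots> = (f ^^ (n - i)) ` (f ^^ i) ` D"
      using \<open>i < n\<close> by (simp add: image_comp flip: funpow_add)
    finally show ?thesis
      using \<open>(f ^^ i) ` D = C\<close> by blast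
  qed
  moreover have "(f ^^ m) ` C \<in> components W" for m
    using iterate_component C unfolding W_def by blast
  ultimately show ?thesis
    unfolding W_def by blast
qed

theorem corollary1p2:
  fixes X :: "'a::metric_space set" and f :: "'a \<Rightarrow> 'a" and n :: nat and x :: 'a
  assumes "compact X" and "continuous_on X f" and "f ` X \<subseteq> X"
    and "n \<ge> 1" and "x \<in> X"
    and "omega_limit X f x \<subseteq> Fix X (f ^^ n)"
  shows "card (components (omega_limit X f x)) dvd n"
proof -
  have "0 < n"
    using assms(4) by simp
  have periodic: "(f ^^ n) w = w" if "w \<in> omega_limit X f x" for w
    using assms(6) that unfolding Fix_def by blast
  have "components (omega_limit X f x) \<noteq> {}"
    using omega_limit_nonempty[OF assms(1,3,5)] by simp
  then obtain C where C: "C \<in> components (omega_limit X f x)"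
    by blast
  have orbit: "components (omega_limit X f x) = range (\<lambda>m. ((`) f ^^ m) C)"
    unfolding funpow_image by (rule omega_limit_components_eq_orbit[OF assms(1-3,5) \<open>0 < n\<close> periodic C])
  have "((`) f ^^ n) C = C"
    unfolding funpow_image using periodic in_components_subset[OF C] by (metis image_cong_id subsetD)
  then show ?thesis
    unfolding orbit using \<open>0 < n\<close> by (rule card_range_funpow_dvd)
qed

end
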